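(* Let $\sigma>0$, $\rho>0$, $C>2$, $\mu\in\mathbb{R}^n$, and let $\nu_1,\dots,\nu_M\in\mathbb{R}^n$ be fixed points with $\min_i\|\nu_i-\mu\|\le\rho$. Let $\tilde Y^2=\mu+\xi-\eta$ where $\xi,\eta\sim N(0,\sigma^2\mathbb{I}_n)$ are independent, and let $i^*\in\arg\min_i\|\tilde Y^2-\nu_i\|$. Then $$\mathbb{P}(\|\nu_{i^*}-\mu\|>(C+1)\rho)\le M\exp\big(-(C-2)^2\rho^2/(16\sigma^2)\big).$$
   Context: $\|\cdot\|$ is the Euclidean norm. *)

theory Defs
  imports "HOL-Probability.Probability"
begin

definition iso_gauss_density :: "real \<Rightarrow> real ^ 'n \<Rightarrow> ennreal" where
  "iso_gauss_density \<sigma> x = ennreal (\<Prod>i\<in>UNIV. normal_density 0 \<sigma> (x $ i))"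

end

theory Submission
  imports Defs
begin

text \<open>Let \<open>\<nu>\<^sub>0\<close> be a centre with \<open>\<parallel>\<nu>\<^sub>0 - \<mu>\<parallel> \<le> \<rho>\<close>. If the centre \<open>\<nu>\<^sub>j\<close> nearest to
  \<open>\<mu> + \<xi> - \<eta>\<close> satisfies \<open>\<parallel>\<nu>\<^sub>j - \<mu>\<parallel> > (C + 1)\<rho>\<close>, then expanding
  \<open>\<parallel>\<mu> + \<xi> - \<eta> - \<nu>\<^sub>j\<parallel> \<le> \<parallel>\<mu> + \<xi> - \<eta> - \<nu>\<^sub>0\<parallel>\<close> forces the Gaussian
  \<open>\<langle>\<xi> - \<eta>, \<nu>\<^sub>j - \<nu>\<^sub>0\<rangle> \<sim> N(0, 2\<sigma>\<^sup>2\<parallel>\<nu>\<^sub>j - \<nu>\<^sub>0\<parallel>\<^sup>2)\<close> to exceed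
  \<open>(C - 2)\<rho>/2 \<cdot> \<parallel>\<nu>\<^sub>j - \<nu>\<^sub>0\<parallel>\<close>. A Chernoff bound, computed from the Gaussian moment generating
  function and the independence of \<open>\<xi>\<close> and \<open>\<eta>\<close>, bounds the probability of this event by
  \<open>exp (-(C - 2)\<^sup>2\<rho>\<^sup>2 / (16\<sigma>\<^sup>2))\<close>; a union bound over the \<open>m\<close> centres finishes the proof.\<close>

lemma nn_integral_exp_mult_normal_density:
  fixes c \<sigma> :: real
  assumes "\<sigma> > 0"
  shows "(\<integral>\<^sup>+ t. ennreal (exp (c * t) * normal_density 0 \<sigma> t) \<partial>lborel) = ennreal (exp (c\<^sup>2 * \<sigma>\<^sup>2 / 2))"
proof -
  have shift: "exp (c * t) * normal_density 0 \<sigma> t = exp (c\<^sup>2 * \<sigma>\<^sup>2 / 2) * normal_density (c * \<sigma>\<^sup>2) \<sigma> t" for t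
  proof -
    have "c * t - t\<^sup>2 / (2 * \<sigma>\<^sup>2) = c\<^sup>2 * \<sigma>\<^sup>2 / 2 - (t - c * \<sigma>\<^sup>2)\<^sup>2 / (2 * \<sigma>\<^sup>2)"
      using assms by (simp add: field_simps power2_eq_square)
    then show ?thesis
      unfolding normal_density_def by (simp add: exp_add[symmetric] exp_diff[symmetric] ac_simps)
  qed
  have "(\<integral>\<^sup>+ t. ennreal (normal_density (c * \<sigma>\<^sup>2) \<sigma> t) \<partial>lborel) = 1"
    using assms by (subst nn_integral_eq_integral) auto
  then show ?thesis
    by (simp add: shift ennreal_mult nn_integral_cmult)
qed

lemma iso_gauss_density_eq_prod_Basis:
  fixes x :: "real ^ 'n"
  shows "iso_gauss_density \<sigma> x = ennreal (\<Prod>b\<in>Basis. normal_density 0 \<sigma> (x \<bullet> b))"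
proof -
  have Basis_eq: "(Basis :: (real ^ 'n) set) = range (\<lambda>i. axis i 1)"
    by (auto simp: Basis_vec_def)
  have "inj (\<lambda>i::'n::finite. axis i (1::real))"
    by (auto simp: inj_def axis_eq_axis)
  then show ?thesis
    unfolding iso_gauss_density_def Basis_eq by (simp add: prod.reindex inner_axis)
qed

lemma nn_integral_prod_normal_density_exp_inner:
  fixes w :: "'a::euclidean_space" and c \<sigma> :: real
  assumes "\<sigma> > 0"
  shows "(\<integral>\<^sup>+ x. ennreal ((\<Prod>b\<in>Basis. normal_density 0 \<sigma> (x \<bullet> b)) * exp (c * (x \<bullet> w))) \<partial>lborel)
    = ennreal (exp (c\<^sup>2 * \<sigma>\<^sup>2 * (norm w)\<^sup>2 / 2))"
proof -
  have factor: "ennreal ((\<Prod>b\<in>Basis. normal_density 0 \<sigma> (x \<bullet> b)) * exp (c * (x \<bullet> w)))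
    = (\<Prod>b\<in>Basis. ennreal (exp (c * (w \<bullet> b) * (x \<bullet> b)) * normal_density 0 \<sigma> (x \<bullet> b)))" for x
  proof -
    have "c * (x \<bullet> w) = (\<Sum>b\<in>Basis. c * (w \<bullet> b) * (x \<bullet> b))"
      by (simp add: euclidean_inner[of x w] sum_distrib_left ac_simps)
    then show ?thesis
      by (simp add: prod_ennreal exp_sum prod.distrib mult.commute)
  qed
  have norm_sq: "(norm w)\<^sup>2 = (\<Sum>b\<in>Basis. (w \<bullet> b)\<^sup>2)"
    using power2_norm_eq_inner[of w] euclidean_inner[of w w] by (simp add: power2_eq_square)
  have "(\<integral>\<^sup>+ x. ennreal ((\<Prod>b\<in>Basis. normal_density 0 \<sigma> (x \<bullet> b)) * exp (c * (x \<bullet> w))) \<partial>lborel)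
    = (\<Prod>b\<in>Basis. \<integral>\<^sup>+ t. ennreal (exp (c * (w \<bullet> b) * t) * normal_density 0 \<sigma> t) \<partial>lborel)"
    unfolding factor by (rule nn_integral_lborel_prod) auto
  also have "\<dots> = (\<Prod>b\<in>Basis. ennreal (exp ((c * (w \<bullet> b))\<^sup>2 * \<sigma>\<^sup>2 / 2)))"
    using nn_integral_exp_mult_normal_density[OF assms] by simp
  also have "\<dots> = ennreal (exp (c\<^sup>2 * \<sigma>\<^sup>2 * (norm w)\<^sup>2 / 2))"
    by (simp add: prod_ennreal exp_sum[symmetric] norm_sq power_mult_distrib
        sum_distrib_left sum_divide_distrib ac_simps)
  finally show ?thesis .
qed

lemma (in prob_space) nn_integral_exp_inner_iso_gauss:
  fixes \<xi> :: "'a \<Rightarrow> real ^ 'n" and w :: "real ^ 'n" and c \<sigma> :: real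
  assumes "\<sigma> > 0" and "distributed M lborel \<xi> (iso_gauss_density \<sigma>)"
  shows "(\<integral>\<^sup>+ \<omega>. ennreal (exp (c * (\<xi> \<omega> \<bullet> w))) \<partial>M) = ennreal (exp (c\<^sup>2 * \<sigma>\<^sup>2 * (norm w)\<^sup>2 / 2))"
  using nn_integral_prod_normal_density_exp_inner[OF assms(1)]
  by (subst distributed_nn_integral[OF assms(2), symmetric])
    (simp_all add: iso_gauss_density_eq_prod_Basis ennreal_mult'[symmetric] prod_nonneg)

lemma (in prob_space) nn_integral_indep_var_mult:
  fixes f g :: "'b \<Rightarrow> ennreal"
  assumes "indep_var S X T Y"
    and "f \<in> borel_measurable S" and "g \<in> borel_measurable T"
  shows "(\<integral>\<^sup>+ \<omega>. f (X \<omega>) * g (Y \<omega>) \<partial>M) = (\<integral>\<^sup>+ \<omega>. f (X \<omega>) \<partial>M) * (\<integral>\<^sup>+ \<omega>. g (Y \<omega>) \<partial>M)"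
proof -
  have "indep_var borel (f \<circ> X) borel (g \<circ> Y)"
    using assms by (rule indep_var_compose)
  moreover have "case_bool borel borel = (\<lambda>_::bool. borel :: ennreal measure)"
    by (rule ext) (simp split: bool.split)
  ultimately have "indep_vars (\<lambda>_. borel) (case_bool (f \<circ> X) (g \<circ> Y)) UNIV"
    unfolding indep_var_def by (simp only:)
  from indep_vars_nn_integral[OF _ this] show ?thesis
    by (simp add: UNIV_bool comp_def mult.commute)
qed

lemma (in prob_space) prob_inner_diff_iso_gauss_ge:
  fixes \<xi> \<eta> :: "'a \<Rightarrow> real ^ 'n" and w :: "real ^ 'n" and k \<sigma> :: real
  assumes "\<sigma> > 0" and "k > 0" and "w \<noteq> 0"
    and \<xi>: "distributed M lborel \<xi> (iso_gauss_density \<sigma>)"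
    and \<eta>: "distributed M lborel \<eta> (iso_gauss_density \<sigma>)"
    and "indep_var borel \<xi> borel \<eta>"
  shows "prob {\<omega> \<in> space M. k * norm w \<le> (\<xi> \<omega> - \<eta> \<omega>) \<bullet> w} \<le> exp (- k\<^sup>2 / (4 * \<sigma>\<^sup>2))"
proof -
  have [measurable]: "\<xi> \<in> borel_measurable M" "\<eta> \<in> borel_measurable M"
    using distributed_measurable[OF \<xi>] distributed_measurable[OF \<eta>] by simp_all
  define v where "v = 2 * \<sigma>\<^sup>2 * (norm w)\<^sup>2"
  \<comment> \<open>\<open>v\<close> is the variance of \<open>(\<xi> - \<eta>) \<bullet> w\<close>; \<open>l\<close> is the optimal Chernoff parameter.\<close>
  define l where "l = k * norm w / v"
  have "l > 0"
    using assms by (simp add: v_def l_def)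
  have mgf: "(\<integral>\<^sup>+ \<omega>. ennreal (exp (l * ((\<xi> \<omega> - \<eta> \<omega>) \<bullet> w))) \<partial>M)
    = ennreal (exp (l\<^sup>2 * v / 2))"
  proof -
    have "(\<integral>\<^sup>+ \<omega>. ennreal (exp (l * ((\<xi> \<omega> - \<eta> \<omega>) \<bullet> w))) \<partial>M)
      = (\<integral>\<^sup>+ \<omega>. ennreal (exp (l * (\<xi> \<omega> \<bullet> w))) * ennreal (exp ((- l) * (\<eta> \<omega> \<bullet> w))) \<partial>M)"
      by (intro nn_integral_cong)
        (simp add: inner_diff_left right_diff_distrib exp_diff exp_minus field_simps ennreal_mult'[symmetric])
    also have "\<dots> = (\<integral>\<^sup>+ \<omega>. ennreal (exp (l * (\<xi> \<omega> \<bullet> w))) \<partial>M) * (\<integral>\<^sup>+ \<omega>. ennreal (exp ((- l) * (\<eta> \<omega> \<bullet> w))) \<partial>M)"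
      using assms(6) by (rule nn_integral_indep_var_mult) simp_all
    also have "\<dots> = ennreal (exp (l\<^sup>2 * v / 2))"
      unfolding nn_integral_exp_inner_iso_gauss[OF assms(1) \<xi>] nn_integral_exp_inner_iso_gauss[OF assms(1) \<eta>]
      by (simp add: v_def ennreal_mult'[symmetric] exp_add[symmetric] field_simps)
    finally show ?thesis .
  qed
  have "emeasure M {\<omega> \<in> space M. k * norm w \<le> (\<xi> \<omega> - \<eta> \<omega>) \<bullet> w}
    \<le> ennreal (exp (- l * (k * norm w))) * ennreal (exp (l\<^sup>2 * v / 2))"
    using Chernoff_ineq_nn_integral_ge[OF \<open>l > 0\<close>, of "space M" M "\<lambda>\<omega>. (\<xi> \<omega> - \<eta> \<omega>) \<bullet> w"]
    by (simp add: mgf)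
  also have "\<dots> = ennreal (exp (- k\<^sup>2 / (4 * \<sigma>\<^sup>2)))"
  proof -
    have "- l * (k * norm w) + l\<^sup>2 * v / 2 = - k\<^sup>2 / (4 * \<sigma>\<^sup>2)"
      using assms(1,3) by (simp add: l_def v_def field_simps power2_eq_square)
    then show ?thesis
      by (simp add: ennreal_mult'[symmetric] exp_add[symmetric])
  qed
  finally show ?thesis
    by (simp add: emeasure_eq_measure)
qed

lemma inner_diff_ge_of_norm_diff_le:
  fixes z a b :: "'a::real_inner"
  assumes "norm (z - a) \<le> norm (z - b)"
  shows "((norm a)\<^sup>2 - (norm b)\<^sup>2) / 2 \<le> z \<bullet> (a - b)"
proof -
  have "(norm (z - a))\<^sup>2 \<le> (norm (z - b))\<^sup>2"
    using assms by (simp add: power_mono)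
  then have "a \<bullet> a - 2 * (z \<bullet> a) \<le> b \<bullet> b - 2 * (z \<bullet> b)"
    by (simp add: power2_norm_eq_inner inner_diff_left inner_diff_right inner_commute)
  then show ?thesis
    by (simp add: power2_norm_eq_inner inner_diff_right)
qed

lemma mult_norm_diff_le_of_norm_gap:
  fixes a b :: "'a::real_normed_vector"
  assumes "0 \<le> k" and "2 * k \<le> norm a - norm b"
  shows "k * norm (a - b) \<le> ((norm a)\<^sup>2 - (norm b)\<^sup>2) / 2"
proof -
  have "k * norm (a - b) \<le> k * (norm a + norm b)"
    using norm_triangle_ineq4 assms(1) by (rule mult_left_mono)
  also have "\<dots> \<le> (norm a - norm b) / 2 * (norm a + norm b)"
    using assms by (intro mult_right_mono) auto
  also have "\<dots> = ((norm a)\<^sup>2 - (norm b)\<^sup>2) / 2"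
    by (simp add: power2_eq_square algebra_simps)
  finally show ?thesis .
qed

lemma inner_diff_ge_of_nearer_far_point:
  fixes z \<mu> p q :: "'a::real_inner" and C \<rho> :: real
  assumes "norm (\<mu> + z - p) \<le> norm (\<mu> + z - q)"
    and "norm (q - \<mu>) \<le> \<rho>" and "(C + 1) * \<rho> < norm (p - \<mu>)" and "C \<ge> 2"
  shows "(C - 2) * \<rho> / 2 * norm (p - q) \<le> z \<bullet> (p - q)"
proof -
  have "0 \<le> \<rho>"
    using assms(2) norm_ge_zero order_trans by blast
  then have "0 \<le> (C - 2) * \<rho> / 2"
    using assms(4) by simp
  moreover have "2 * ((C - 2) * \<rho> / 2) \<le> norm (p - \<mu>) - norm (q - \<mu>)"
    using assms(2,3) \<open>0 \<le> \<rho>\<close> by (simp add: ring_distribs)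
  ultimately have "(C - 2) * \<rho> / 2 * norm (p - q) \<le> ((norm (p - \<mu>))\<^sup>2 - (norm (q - \<mu>))\<^sup>2) / 2"
    using mult_norm_diff_le_of_norm_gap[of "(C - 2) * \<rho> / 2" "p - \<mu>" "q - \<mu>"] by simp
  also have "\<dots> \<le> z \<bullet> (p - q)"
    using inner_diff_ge_of_norm_diff_le[of z "p - \<mu>" "q - \<mu>"] assms(1) by (simp add: algebra_simps)
  finally show ?thesis .
qed

lemma (in finite_measure) measure_UN_le_card_mult:
  fixes p :: real
  assumes "finite J" and "A ` J \<subseteq> sets M"
    and "\<And>j. j \<in> J \<Longrightarrow> measure M (A j) \<le> p"
  shows "measure M (\<Union>j\<in>J. A j) \<le> card J * p"
proof -
  have "measure M (\<Union>j\<in>J. A j) \<le> (\<Sum>j\<in>J. measure M (A j))"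
    using assms(1,2) by (rule finite_measure_subadditive_finite)
  also have "\<dots> \<le> card J * p"
    using assms(3) by (rule sum_bounded_above)
  finally show ?thesis .
qed

theorem mainTheorem15:
  fixes M :: "'a measure" and \<xi> \<eta> :: "'a \<Rightarrow> real ^ 'n"
    and \<sigma> \<rho> C :: real and \<mu> :: "real ^ 'n"
    and m :: nat and \<nu> :: "nat \<Rightarrow> real ^ 'n" and istar :: "'a \<Rightarrow> nat"
  assumes "prob_space M"
    and "\<sigma> > 0" and "\<rho> > 0" and "C > 2"
    and "m > 0"
    and "(MIN i\<in>{..<m}. norm (\<nu> i - \<mu>)) \<le> \<rho>"
    and "distributed M lborel \<xi> (iso_gauss_density \<sigma>)"
    and "distributed M lborel \<eta> (iso_gauss_density \<sigma>)"
    and "prob_space.indep_var M borel \<xi> borel \<eta>"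
    and "\<And>\<omega>. istar \<omega> < m"
    and "\<And>\<omega> j. j < m \<Longrightarrow>
           norm ((\<mu> + \<xi> \<omega> - \<eta> \<omega>) - \<nu> (istar \<omega>)) \<le> norm ((\<mu> + \<xi> \<omega> - \<eta> \<omega>) - \<nu> j)"
  shows "measure M {\<omega> \<in> space M. norm (\<nu> (istar \<omega>) - \<mu>) > (C + 1) * \<rho>}
           \<le> real m * exp (- ((C - 2)\<^sup>2 * \<rho>\<^sup>2) / (16 * \<sigma>\<^sup>2))"
proof -
  interpret prob_space M by fact
  have [measurable]: "\<xi> \<in> borel_measurable M" "\<eta> \<in> borel_measurable M"
    using distributed_measurable[OF assms(7)] distributed_measurable[OF assms(8)] by simp_all
  have "(MIN i\<in>{..<m}. norm (\<nu> i - \<mu>)) \<in> (\<lambda>i. norm (\<nu> i - \<mu>)) ` {..<m}"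
    using assms(5) by (intro Min_in) auto
  then obtain i0 where i0: "i0 < m" "norm (\<nu> i0 - \<mu>) \<le> \<rho>"
    using assms(6) by auto
  define k where "k = (C - 2) * \<rho> / 2"
  define J where "J = {j. j < m \<and> (C + 1) * \<rho> < norm (\<nu> j - \<mu>)}"
  define F where "F j = {\<omega> \<in> space M. k * norm (\<nu> j - \<nu> i0) \<le> (\<xi> \<omega> - \<eta> \<omega>) \<bullet> (\<nu> j - \<nu> i0)}" for j
  have cover: "{\<omega> \<in> space M. norm (\<nu> (istar \<omega>) - \<mu>) > (C + 1) * \<rho>} \<subseteq> (\<Union>j\<in>J. F j)"
  proof
    fix \<omega> assume \<omega>: "\<omega> \<in> {\<omega> \<in> space M. norm (\<nu> (istar \<omega>) - \<mu>) > (C + 1) * \<rho>}"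
    then have "k * norm (\<nu> (istar \<omega>) - \<nu> i0) \<le> (\<xi> \<omega> - \<eta> \<omega>) \<bullet> (\<nu> (istar \<omega>) - \<nu> i0)"
      unfolding k_def using assms(4,11) i0 by (intro inner_diff_ge_of_nearer_far_point) (auto simp: add_diff_eq)
    then show "\<omega> \<in> (\<Union>j\<in>J. F j)"
      using \<omega> assms(10) by (auto simp: J_def F_def)
  qed
  have prob_F: "prob (F j) \<le> exp (- k\<^sup>2 / (4 * \<sigma>\<^sup>2))" if "j \<in> J" for j
  proof -
    have "\<rho> < (C + 1) * \<rho>"
      using assms(3,4) by (simp add: distrib_right)
    then have "\<nu> j \<noteq> \<nu> i0"
      using that i0(2) by (auto simp: J_def)
    then show ?thesis
      unfolding F_def using assms(2-4,7-9) by (intro prob_inner_diff_iso_gauss_ge) (simp_all add: k_def)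
  qed
  have "prob {\<omega> \<in> space M. norm (\<nu> (istar \<omega>) - \<mu>) > (C + 1) * \<rho>} \<le> prob (\<Union>j\<in>J. F j)"
    using cover by (rule finite_measure_mono) (auto simp: F_def J_def)
  also have "\<dots> \<le> card J * exp (- k\<^sup>2 / (4 * \<sigma>\<^sup>2))"
    using prob_F by (intro measure_UN_le_card_mult) (auto simp: J_def F_def)
  also have "\<dots> \<le> m * exp (- k\<^sup>2 / (4 * \<sigma>\<^sup>2))"
    using card_mono[of "{..<m}" J] by (intro mult_right_mono) (auto simp: J_def)
  finally show ?thesis
    by (simp add: k_def power_mult_distrib power_divide)
qed

end
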